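(* Let $(r_k)_{k\ge1}$ be a sequence of real numbers such that for every $\epsilon>0$ there exists $K=K(\epsilon)\in\mathbb{N}$ with the following property: whenever $k_1,\dots,k_n\in\mathbb{N}$ satisfy $k_1,\dots,k_n\ge K$ and $k=k_1+\dots+k_n$, we have $r_k\le r_{k_1}+\dots+r_{k_n}+k\epsilon$. Then $\lim_{k\to\infty}r_k/k$ exists. *)

theory Defs
  imports Complex_Main "HOL-Library.Extended_Real"
begin

end

theory Submission
  imports Defs
begin

text \<open>Fix \<open>\<epsilon>\<close> and a block length \<open>m \<ge> K(\<epsilon>)\<close>. Every \<open>k \<ge> m\<close> is a sum of
  copies of \<open>m\<close> and one block of length between \<open>m\<close> and \<open>2m\<close>, so
  \<open>r\<^sub>k \<le> k r\<^sub>m / m + C\<^sub>m + k\<epsilon>\<close> with \<open>C\<^sub>m\<close> independent of \<open>k\<close>. Dividing by \<open>k\<close> gives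
  \<open>limsup r\<^sub>k / k \<le> r\<^sub>m / m + 2\<epsilon>\<close> for all large \<open>m\<close>, hence \<open>limsup \<le> liminf + 2\<epsilon>\<close>.\<close>

definition approx_subadditive :: "(nat \<Rightarrow> real) \<Rightarrow> nat \<Rightarrow> real \<Rightarrow> bool" where
  "approx_subadditive r K e \<longleftrightarrow>
     (\<forall>ks. ks \<noteq> [] \<longrightarrow> (\<forall>x\<in>set ks. x \<ge> 1 \<and> x \<ge> K) \<longrightarrow>
        r (sum_list ks) \<le> sum_list (map r ks) + real (sum_list ks) * e)"

lemma div_mod_blocks:
  fixes k m :: nat
  assumes "m \<ge> 1" "k \<ge> m"
  shows "(k div m - 1) * m + (m + k mod m) = k"
proof -
  have "k div m \<ge> 1"
    using div_le_mono[OF assms(2), of m] assms(1) by simp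
  then have "(k div m - 1) * m + (m + k mod m) = k div m * m + k mod m"
    by (cases "k div m") auto
  then show ?thesis
    by simp
qed

lemma approx_subadditive_split:
  assumes "approx_subadditive r K e" and "m \<ge> 1" "m \<ge> K" "k \<ge> m"
  shows "r k \<le> real (k div m - 1) * r m + r (m + k mod m) + real k * e"
proof -
  define ks where "ks = replicate (k div m - 1) m @ [m + k mod m]"
  have "sum_list ks = (k div m - 1) * m + (m + k mod m)"
    by (simp add: ks_def sum_list_replicate)
  also have "\<dots> = k"
    using assms(2,4) by (rule div_mod_blocks)
  finally have "sum_list ks = k" .
  moreover have "ks \<noteq> []" and "\<forall>x\<in>set ks. x \<ge> 1 \<and> x \<ge> K"
    using assms(2,3) by (auto simp: ks_def)
  ultimately have "r k \<le> sum_list (map r ks) + real k * e"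
    using assms(1) unfolding approx_subadditive_def by metis
  then show ?thesis
    by (simp add: ks_def sum_list_replicate)
qed

lemma approx_subadditive_le_linear:
  assumes "approx_subadditive r K e" and "m \<ge> 1" "m \<ge> K" "k \<ge> m"
  shows "r k \<le> real k * (r m / m) + ((\<Sum>j<2*m. \<bar>r j\<bar>) + 2 * \<bar>r m\<bar>) + real k * e"
proof -
  define s where "s = k mod m"
  have "(k div m - 1) * m + s + m = k"
    using div_mod_blocks[OF assms(2,4)] unfolding s_def by linarith
  then have "real ((k div m - 1) * m + s + m) = real k"
    by (rule arg_cong)
  then have blocks: "real (k div m - 1) * real m = real k - real s - real m"
    unfolding of_nat_add of_nat_mult by linarith
  have "real (k div m - 1) * r m = (real (k div m - 1) * real m) * (r m / m)"
    using assms(2) by simp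
  also have "\<dots> = real k * (r m / m) - (real s + real m) * (r m / m)"
    unfolding blocks by (simp add: algebra_simps)
  finally have copies: "real (k div m - 1) * r m = real k * (r m / m) - (real s + real m) * (r m / m)" .
  have "\<bar>(real s + real m) * (r m / m)\<bar> = (real s + real m) / m * \<bar>r m\<bar>"
    by (simp add: abs_mult)
  also have "\<dots> \<le> 2 * \<bar>r m\<bar>"
    using assms(2) by (intro mult_right_mono) (auto simp: s_def field_simps)
  finally have rest: "\<bar>(real s + real m) * (r m / m)\<bar> \<le> 2 * \<bar>r m\<bar>" .
  have "r (m + s) \<le> \<bar>r (m + s)\<bar>"
    by simp
  also have "\<dots> \<le> (\<Sum>j<2*m. \<bar>r j\<bar>)"
    using assms(2) by (intro member_le_sum) (auto simp: s_def)
  finally have last_block: "r (m + s) \<le> (\<Sum>j<2*m. \<bar>r j\<bar>)" .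
  show ?thesis
    using approx_subadditive_split[OF assms] copies rest last_block unfolding s_def by linarith
qed

lemma approx_subadditive_Limsup_le:
  assumes "approx_subadditive r K e" and "e > 0" "m \<ge> 1" "m \<ge> K"
  shows "Limsup sequentially (\<lambda>k. ereal (r k / k)) \<le> ereal (r m / m + 2 * e)"
proof (rule Limsup_bounded)
  define C where "C = (\<Sum>j<2*m. \<bar>r j\<bar>) + 2 * \<bar>r m\<bar>"
  obtain N :: nat where "C / e \<le> N"
    using real_arch_simple by blast
  then have N: "C \<le> real N * e"
    using assms(2) by (simp add: divide_le_eq)
  have "r k / k \<le> r m / m + 2 * e" if k: "k \<ge> max N m" for k
  proof -
    have "real N * e \<le> real k * e"
      using k assms(2) by (intro mult_right_mono) auto
    then have "C \<le> real k * e"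
      using N by linarith
    then have "r k \<le> real k * (r m / m + 2 * e)"
      using approx_subadditive_le_linear[OF assms(1,3,4), of k] k unfolding C_def
      by (simp add: algebra_simps)
    then show ?thesis
      using k assms(3) by (simp add: divide_le_eq mult.commute)
  qed
  then show "\<forall>\<^sub>F k in sequentially. ereal (r k / k) \<le> ereal (r m / m + 2 * e)"
    unfolding eventually_sequentially by (auto intro!: exI[of _ "max N m"])
qed

lemma convergent_ereal_if_Limsup_le_tail:
  fixes f :: "nat \<Rightarrow> real"
  assumes "\<And>e. e > 0 \<Longrightarrow> \<exists>K. \<forall>m\<ge>K. Limsup sequentially (\<lambda>k. ereal (f k)) \<le> ereal (f m + e)"
  shows "convergent (\<lambda>k. ereal (f k))"
proof -
  have "Limsup sequentially (\<lambda>k. ereal (f k)) \<le> Liminf sequentially (\<lambda>k. ereal (f k))"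
  proof (rule ereal_le_epsilon2)
    fix e :: real
    assume "e > 0"
    then obtain K where "\<forall>m\<ge>K. Limsup sequentially (\<lambda>k. ereal (f k)) \<le> ereal (f m + e)"
      using assms by blast
    then have "Limsup sequentially (\<lambda>k. ereal (f k)) \<le> Liminf sequentially (\<lambda>m. ereal (f m) + ereal e)"
      by (intro Liminf_bounded) (auto simp: eventually_sequentially)
    also have "\<dots> = Liminf sequentially (\<lambda>k. ereal (f k)) + ereal e"
      by (rule Liminf_add_ereal_right) auto
    finally show "Limsup sequentially (\<lambda>k. ereal (f k)) \<le> Liminf sequentially (\<lambda>k. ereal (f k)) + ereal e" .
  qed
  moreover have "Liminf sequentially (\<lambda>k. ereal (f k)) \<le> Limsup sequentially (\<lambda>k. ereal (f k))"
    by (rule Liminf_le_Limsup) simp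
  ultimately show ?thesis
    unfolding convergent_ereal by simp
qed

theorem lemma2p9:
  fixes r :: "nat \<Rightarrow> real"
  assumes "\<forall>\<epsilon>>0. \<exists>K::nat. \<forall>ks::nat list. ks \<noteq> [] \<longrightarrow>
             (\<forall>x\<in>set ks. x \<ge> 1 \<and> x \<ge> K) \<longrightarrow>
             r (sum_list ks) \<le> sum_list (map r ks) + real (sum_list ks) * \<epsilon>"
  shows "\<exists>L::ereal. ((\<lambda>k. ereal (r k / real k)) \<longlongrightarrow> L) sequentially"
proof -
  have "\<exists>K. \<forall>m\<ge>K. Limsup sequentially (\<lambda>k. ereal (r k / k)) \<le> ereal (r m / m + e)"
    if "e > 0" for e
  proof -
    obtain K where "approx_subadditive r K (e / 2)"
      using assms \<open>e > 0\<close> unfolding approx_subadditive_def by (meson half_gt_zero)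
    then have "\<forall>m\<ge>max K 1. Limsup sequentially (\<lambda>k. ereal (r k / k)) \<le> ereal (r m / m + e)"
      using approx_subadditive_Limsup_le[of r K "e / 2"] \<open>e > 0\<close> by simp
    then show ?thesis
      by blast
  qed
  then have "convergent (\<lambda>k. ereal (r k / k))"
    by (rule convergent_ereal_if_Limsup_le_tail)
  then show ?thesis
    by (auto simp: convergent_def)
qed

end
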